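(* Let $\mathcal{H}=(V,\mathcal{A})$ be a HyTN (possibly containing both multi-head and multi-tail hyperarcs) all of whose weights are integers, and suppose $\mathcal{H}$ is consistent. Let $T=\sum_{A\in\mathcal{A}}\sum_{v} |w_A(v)|$, where for each hyperarc $A$ the inner sum ranges over the nodes $v$ at which $w_A$ is defined (the heads of a multi-head hyperarc, the tails of a multi-tail hyperarc). Then $\mathcal{H}$ admits a feasible scheduling $s:V\to\{-T,-T+1,\ldots,T-1,T\}$ (in particular an integral one).
   Context: A Hyper Temporal Network (HyTN) is a pair $\mathcal{H}=(V,\mathcal{A})$ with $V$ a finite set of nodes (timepoints) and $\mathcal{A}$ a finite set of hyperarcs. Each hyperarc is either multi-head or multi-tail. A multi-head hyperarc $A=(t_A,H_A,w_A)$ has a tail $t_A\in V$, a nonempty head set $H_A\subseteq V\setminus\{t_A\}$ and weights $w_A(v)\in\mathbb{R}$ for $v\in H_A$. A multi-tail hyperarc $A=(T_A,h_A,w_A)$ has a head $h_A\in V$, a nonempty tail set $T_A\subseteq V\setminus\{h_A\}$ and weights $w_A(v)\in\mathbb{R}$ for $v\in T_A$. A hyperarc with exactly one head (resp. one tail) is a standard arc $(t,h,w)$. A scheduling $s:V\to\mathbb{R}$ is feasible if: for every standard arc $(t,h,w)$, $s(h)-s(t)\le w$; for every multi-head hyperarc $A$, $s(t_A)\ge\min_{v\in H_A}\{s(v)-w_A(v)\}$; for every multi-tail hyperarc $A$, $s(h_A)\le\max_{v\in T_A}\{s(v)+w_A(v)\}$. $\mathcal{H}$ is consistent if it admits a feasible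 scheduling. *)

theory Defs
  imports Main "HOL.Real"
begin

text \<open>A hyperarc is either multi-head (tail, head set, weights on heads)
or multi-tail (tail set, head, weights on tails). A standard arc is a
hyperarc with a single head (resp. single tail).\<close>

datatype 'v hyperarc =
    MultiHead 'v "'v set" "'v \<Rightarrow> real"
  | MultiTail "'v set" 'v "'v \<Rightarrow> real"

fun arc_wdom :: "'v hyperarc \<Rightarrow> 'v set" where
  "arc_wdom (MultiHead t H w) = H"
| "arc_wdom (MultiTail T h w) = T"

fun arc_weight :: "'v hyperarc \<Rightarrow> 'v \<Rightarrow> real" where
  "arc_weight (MultiHead t H w) = w"
| "arc_weight (MultiTail T h w) = w"

fun wf_hyperarc :: "'v set \<Rightarrow> 'v hyperarc \<Rightarrow> bool" where
  "wf_hyperarc V (MultiHead t H w) \<longleftrightarrow> t \<in> V \<and> H \<noteq> {} \<and> H \<subseteq> V - {t}"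
| "wf_hyperarc V (MultiTail T h w) \<longleftrightarrow> h \<in> V \<and> T \<noteq> {} \<and> T \<subseteq> V - {h}"

definition HyTN :: "'v set \<Rightarrow> 'v hyperarc set \<Rightarrow> bool" where
  "HyTN V A \<longleftrightarrow> finite V \<and> finite A \<and> (\<forall>a\<in>A. wf_hyperarc V a)"

text \<open>Satisfaction of a hyperarc by a scheduling. For a standard arc
(single head / single tail) this is exactly s(h) - s(t) \<le> w.\<close>
fun satisfies :: "('v \<Rightarrow> real) \<Rightarrow> 'v hyperarc \<Rightarrow> bool" where
  "satisfies s (MultiHead t H w) \<longleftrightarrow> s t \<ge> Min ((\<lambda>v. s v - w v) ` H)"
| "satisfies s (MultiTail T h w) \<longleftrightarrow> s h \<le> Max ((\<lambda>v. s v + w v) ` T)"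

definition feasible :: "'v hyperarc set \<Rightarrow> ('v \<Rightarrow> real) \<Rightarrow> bool" where
  "feasible A s \<longleftrightarrow> (\<forall>a\<in>A. satisfies s a)"

definition consistent :: "'v hyperarc set \<Rightarrow> bool" where
  "consistent A \<longleftrightarrow> (\<exists>s. feasible A s)"

definition integer_weights :: "'v hyperarc set \<Rightarrow> bool" where
  "integer_weights A \<longleftrightarrow> (\<forall>a\<in>A. \<forall>v\<in>arc_wdom a. arc_weight a v \<in> \<int>)"

definition total_weight :: "'v hyperarc set \<Rightarrow> real" where
  "total_weight A = (\<Sum>a\<in>A. \<Sum>v\<in>arc_wdom a. \<bar>arc_weight a v\<bar>)"

end

theory Submission
  imports Defs
begin

text \<open>A feasible scheduling satisfies every hyperarc through one of its component standard arcs
(the one attaining the min, resp. max); replacing each hyperarc by that arc yields a system of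
integer difference constraints, which implies the hyperarc system. For difference constraints,
the nonpositive integer solution with maximal coordinate sum has the property that every level
between a value g v and 0 is crossed by a tight constraint with negative weight; a constraint of
weight w crosses at most |w| levels, so g v \<ge> -T.\<close>

definition diff_solution :: "'e set \<Rightarrow> ('e \<Rightarrow> 'v) \<Rightarrow> ('e \<Rightarrow> 'v) \<Rightarrow> ('e \<Rightarrow> int) \<Rightarrow> ('v \<Rightarrow> int) \<Rightarrow> bool"
  where "diff_solution E X Y W g \<longleftrightarrow> (\<forall>e\<in>E. g (X e) - g (Y e) \<le> W e)"

lemma satisfies_via_active_arc:
  assumes "finite (arc_wdom a)" "arc_wdom a \<noteq> {}" "satisfies s0 a"
  obtains x y v where "v \<in> arc_wdom a" "s0 x - s0 y \<le> arc_weight a v"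
    "\<And>s. s x - s y \<le> arc_weight a v \<Longrightarrow> satisfies s a"
proof (cases a)
  case (MultiHead t H w)
  with assms have "finite H" "H \<noteq> {}" by auto
  then have "Min ((\<lambda>v. s0 v - w v) ` H) \<in> (\<lambda>v. s0 v - w v) ` H" by (intro Min_in) auto
  then obtain v where v: "v \<in> H" "Min ((\<lambda>v. s0 v - w v) ` H) = s0 v - w v" by auto
  have "satisfies s a" if "s v - s t \<le> w v" for s
    using that Min_le[OF finite_imageI[OF \<open>finite H\<close>], of "s v - w v"] v MultiHead by force
  with v assms(3) MultiHead show ?thesis by (intro that[of v v t]) auto
next
  case (MultiTail T h w)
  with assms have "finite T" "T \<noteq> {}" by auto
  then have "Max ((\<lambda>v. s0 v + w v) ` T) \<in> (\<lambda>v. s0 v + w v) ` T" by (intro Max_in) auto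
  then obtain v where v: "v \<in> T" "Max ((\<lambda>v. s0 v + w v) ` T) = s0 v + w v" by auto
  have "satisfies s a" if "s h - s v \<le> w v" for s
    using that Max_ge[OF finite_imageI[OF \<open>finite T\<close>], of "s v + w v"] v MultiTail by force
  with v assms(3) MultiTail show ?thesis by (intro that[of v h v]) auto
qed

lemma diff_solution_floor:
  assumes "\<forall>e\<in>E. s (X e) - s (Y e) \<le> of_int (W e)"
  shows "diff_solution E X Y W (\<lambda>v. \<lfloor>s v\<rfloor>)"
  unfolding diff_solution_def
proof
  fix e assume "e \<in> E"
  then have "\<lfloor>s (X e)\<rfloor> \<le> \<lfloor>s (Y e) + of_int (W e)\<rfloor>"
    using assms by (intro floor_mono) auto
  then show "\<lfloor>s (X e)\<rfloor> - \<lfloor>s (Y e)\<rfloor> \<le> W e" by simp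
qed

lemma interval_cover_length_le:
  fixes l u :: "'e \<Rightarrow> int"
  assumes "finite E" "{m..<n} \<subseteq> (\<Union>e\<in>E. {l e..<u e})"
  shows "n - m \<le> (\<Sum>e\<in>E. max 0 (u e - l e))"
proof -
  have "card {m..<n} \<le> card (\<Union>e\<in>E. {l e..<u e})"
    using assms by (intro card_mono) auto
  also have "\<dots> \<le> (\<Sum>e\<in>E. card {l e..<u e})"
    using card_UN_le[OF assms(1)] .
  finally have "int (card {m..<n}) \<le> (\<Sum>e\<in>E. int (card {l e..<u e}))"
    by (metis of_nat_le_iff of_nat_sum)
  then show ?thesis by (simp add: max_def split: if_splits)
qed

text \<open>Raising every value \<open>\<le> c\<close> by one preserves all constraints unless some constraint is
tight across the cut between \<open>c\<close> and \<open>c + 1\<close>; so a sum-maximal solution has such a constraint.\<close>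

lemma maximal_nonpos_diff_solution_cut:
  fixes g :: "'v \<Rightarrow> int"
  assumes "finite V" "diff_solution E X Y W g" "\<forall>v\<in>V. g v \<le> 0"
    and maximal: "\<And>h. diff_solution E X Y W h \<Longrightarrow> \<forall>v\<in>V. h v \<le> 0 \<Longrightarrow> sum h V \<le> sum g V"
    and "c < 0" "v0 \<in> V" "g v0 \<le> c"
  shows "\<exists>e\<in>E. g (X e) \<le> c \<and> c < g (Y e) \<and> g (Y e) - g (X e) \<le> - W e"
proof (rule ccontr)
  assume no_cut: "\<not> ?thesis"
  define h where "h v = (if g v \<le> c then g v + 1 else g v)" for v
  have "diff_solution E X Y W h"
    using assms(2) no_cut unfolding diff_solution_def h_def by force
  moreover have "\<forall>v\<in>V. h v \<le> 0" using assms(3,5) unfolding h_def by auto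
  moreover have "sum g V < sum h V"
    using assms(1,6,7) by (intro sum_strict_mono_ex1) (auto simp: h_def)
  ultimately show False using maximal by fastforce
qed

lemma diff_solution_bounded:
  fixes W :: "'e \<Rightarrow> int" and s :: "'v \<Rightarrow> real"
  assumes "finite V" "finite E" "\<forall>e\<in>E. s (X e) - s (Y e) \<le> of_int (W e)"
  shows "\<exists>g. diff_solution E X Y W g \<and> (\<forall>v\<in>V. - (\<Sum>e\<in>E. \<bar>W e\<bar>) \<le> g v \<and> g v \<le> 0)"
proof -
  define P where "P g \<longleftrightarrow> diff_solution E X Y W g \<and> (\<forall>v\<in>V. g v \<le> 0)" for g
  define g0 where "g0 v = \<lfloor>s v\<rfloor> - Max ((\<lambda>v. \<lfloor>s v\<rfloor>) ` V)" for v
  have "diff_solution E X Y W (\<lambda>v. \<lfloor>s v\<rfloor>)"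
    using assms(3) by (rule diff_solution_floor)
  then have "P g0"
    using assms(1)
    unfolding P_def g0_def diff_solution_def by auto
  then obtain g where "P g" and least: "\<And>h. P h \<Longrightarrow> nat (- sum g V) \<le> nat (- sum h V)"
    using ex_has_least_nat[of P g0 "\<lambda>g. nat (- sum g V)"] by blast
  then have sol: "diff_solution E X Y W g" and nonpos: "\<forall>v\<in>V. g v \<le> 0"
    unfolding P_def by auto
  have maximal: "sum h V \<le> sum g V" if "diff_solution E X Y W h" "\<forall>v\<in>V. h v \<le> 0" for h
    using least[of h] that sum_nonpos[of V h] unfolding P_def by simp
  have "- (\<Sum>e\<in>E. \<bar>W e\<bar>) \<le> g v" if "v \<in> V" for v
  proof -
    define tight where "tight e \<longleftrightarrow> g (Y e) - g (X e) \<le> - W e" for e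
    define u where "u e = (if tight e then g (Y e) else g (X e))" for e
    have "{g v..<0} \<subseteq> (\<Union>e\<in>E. {g (X e)..<u e})"
      using maximal_nonpos_diff_solution_cut[OF assms(1) sol nonpos maximal _ that]
      unfolding u_def tight_def by fastforce
    then have "0 - g v \<le> (\<Sum>e\<in>E. max 0 (u e - g (X e)))"
      by (rule interval_cover_length_le[OF assms(2)])
    also have "\<dots> \<le> (\<Sum>e\<in>E. \<bar>W e\<bar>)"
      by (intro sum_mono) (auto simp: u_def tight_def)
    finally show ?thesis by simp
  qed
  with sol nonpos show ?thesis by blast
qed

lemma HyTN_arc_wdom:
  assumes "HyTN V A" "a \<in> A"
  shows "finite (arc_wdom a)" "arc_wdom a \<noteq> {}"
proof -
  have "finite V" "wf_hyperarc V a" using assms unfolding HyTN_def by auto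
  then show "finite (arc_wdom a)" "arc_wdom a \<noteq> {}"
    by (cases a; auto intro: finite_subset)+
qed

lemma feasible_active_arcs:
  assumes "\<And>a. a \<in> A \<Longrightarrow> finite (arc_wdom a) \<and> arc_wdom a \<noteq> {}" "feasible A s0"
  obtains X Y U where "\<And>a. a \<in> A \<Longrightarrow> U a \<in> arc_wdom a"
    "\<And>a. a \<in> A \<Longrightarrow> s0 (X a) - s0 (Y a) \<le> arc_weight a (U a)"
    "\<And>a s. a \<in> A \<Longrightarrow> s (X a) - s (Y a) \<le> arc_weight a (U a) \<Longrightarrow> satisfies s a"
proof -
  have "\<forall>a\<in>A. \<exists>x y v. v \<in> arc_wdom a \<and> s0 x - s0 y \<le> arc_weight a v
      \<and> (\<forall>s. s x - s y \<le> arc_weight a v \<longrightarrow> satisfies s a)"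
    using assms satisfies_via_active_arc unfolding feasible_def by metis
  then show ?thesis using that by metis
qed

lemma sum_abs_active_weights_le_total_weight:
  assumes "\<And>a. a \<in> A \<Longrightarrow> finite (arc_wdom a) \<and> U a \<in> arc_wdom a"
  shows "(\<Sum>a\<in>A. \<bar>arc_weight a (U a)\<bar>) \<le> total_weight A"
  unfolding total_weight_def using assms by (intro sum_mono member_le_sum) auto

theorem lemma1:
  fixes V :: "'v set" and A :: "'v hyperarc set"
  assumes "HyTN V A"
    and "integer_weights A"
    and "consistent A"
  shows "\<exists>s. feasible A s \<and>
           (\<forall>v\<in>V. s v \<in> \<int> \<and> - total_weight A \<le> s v \<and> s v \<le> total_weight A)"
proof -
  have finite: "finite V" "finite A" using assms(1) unfolding HyTN_def by auto
  note dom = HyTN_arc_wdom[OF assms(1)]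
  obtain s0 where "feasible A s0" using assms(3) unfolding consistent_def by auto
  then obtain X Y U where U: "\<And>a. a \<in> A \<Longrightarrow> U a \<in> arc_wdom a"
    and s0: "\<And>a. a \<in> A \<Longrightarrow> s0 (X a) - s0 (Y a) \<le> arc_weight a (U a)"
    and active: "\<And>a s. a \<in> A \<Longrightarrow> s (X a) - s (Y a) \<le> arc_weight a (U a) \<Longrightarrow> satisfies s a"
    using feasible_active_arcs[of A] dom by metis
  define W where "W a = \<lfloor>arc_weight a (U a)\<rfloor>" for a
  have W: "of_int (W a) = arc_weight a (U a)" if "a \<in> A" for a
    using assms(2) U[OF that] that unfolding integer_weights_def W_def
    by (metis Ints_cases floor_of_int)
  obtain g where g: "diff_solution A X Y W g" "\<forall>v\<in>V. - (\<Sum>a\<in>A. \<bar>W a\<bar>) \<le> g v \<and> g v \<le> 0"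
    using diff_solution_bounded[OF finite, of s0 X Y W] s0 W by force
  have feasible: "feasible A (\<lambda>v. of_int (g v))"
    using g(1) active W unfolding feasible_def diff_solution_def
    by (metis of_int_diff of_int_le_iff)
  have bound: "of_int (\<Sum>a\<in>A. \<bar>W a\<bar>) \<le> total_weight A"
    using sum_abs_active_weights_le_total_weight[of A U] U dom W by simp
  have range: "- total_weight A \<le> of_int (g v) \<and> of_int (g v) \<le> total_weight A" if "v \<in> V" for v
  proof -
    have "of_int (- (\<Sum>a\<in>A. \<bar>W a\<bar>)) \<le> (of_int (g v) :: real)" "(of_int (g v) :: real) \<le> 0"
      using g(2) that of_int_le_iff[where 'a=real] by (metis of_int_0)+
    with bound show ?thesis by simp
  qed
  show ?thesis using feasible range by (intro exI[of _ "\<lambda>v. of_int (g v)"]) simp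
qed

end
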